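(* Let $t,t'\in B_n$ with $t\neq t'$ and let $G$ be a digraph such that $\mathbb{A}(G)$ satisfies $t\approx t'$. Then $E_G\le L_{t,t'}+1$.
   Context: Digraphs $G=(V,E)$ have $E\subseteq V\times V$, loops allowed, possibly infinite. $\mathbb{A}(G)$ is the groupoid on $V\cup\{\infty\}$ with $xy=x$ if $x,y\in V$, $(x,y)\in E$, and $xy=\infty$ otherwise. $B_n$: binary terms with $x_1,\dots,x_n$ each occurring once in this order; $G(t)$: rooted tree defined by $G(x_i)$ a single vertex and $G(t_1t_2)=G(t_1)\cup G(t_2)$ plus an edge from the leftmost variable of $t_1$ to that of $t_2$; root $x_1$. With $T=G(t)$, $T'=G(t')$ and depth $d_T$: $L_{t,t'}$ is the largest integer $m$ such that for all $x$, if $d_T(x)\le m$ or $d_{T'}(x)\le m$ then $d_T(x)=d_{T'}(x)$. A strongly connected component (SCC) is trivial if it is a single vertex without a loop, nontrivial otherwise. A path $v_0\to\dots\to v_\ell$ is an entryway to a nontrivial SCC $K$ if $v_0,\dots,v_{\ell-1}$ lie in trivial SCCs and $v_\ell\in K$. $E_G$ is the maximal length of an entryway ($\infty$ if unbounded, $-\infty$ if none). *)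

theory Defs
  imports Main "HOL-Library.Extended_Real"
begin

datatype bterm = Var nat | Op bterm bterm

fun leaves :: "bterm \<Rightarrow> nat list" where
  "leaves (Var i) = [i]"
| "leaves (Op a b) = leaves a @ leaves b"

definition Bn :: "nat \<Rightarrow> bterm set" where
  "Bn n = {t. leaves t = [1..<n+1]}"

fun lmv :: "bterm \<Rightarrow> nat" where
  "lmv (Var i) = i"
| "lmv (Op a b) = lmv a"

fun tedges :: "bterm \<Rightarrow> (nat \<times> nat) set" where
  "tedges (Var i) = {}"
| "tedges (Op a b) = tedges a \<union> tedges b \<union> {(lmv a, lmv b)}"

definition tdepth :: "bterm \<Rightarrow> nat \<Rightarrow> nat" where
  "tdepth t x = (LEAST k. (1, x) \<in> (tedges t) ^^ k)"

definition Ltt :: "nat \<Rightarrow> bterm \<Rightarrow> bterm \<Rightarrow> int" where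
  "Ltt n t t' = (GREATEST m :: int. \<forall>x\<in>{1..n}.
      (int (tdepth t x) \<le> m \<or> int (tdepth t' x) \<le> m) \<longrightarrow> tdepth t x = tdepth t' x)"

(* The groupoid A(G) on V \<union> {\<infinity>}; None plays the role of \<infinity> *)
definition gcarrier :: "'a set \<Rightarrow> 'a option set" where
  "gcarrier V = Some ` V \<union> {None}"

fun gmul :: "'a set \<Rightarrow> ('a \<times> 'a) set \<Rightarrow> 'a option \<Rightarrow> 'a option \<Rightarrow> 'a option" where
  "gmul V E (Some x) (Some y) = (if x \<in> V \<and> y \<in> V \<and> (x, y) \<in> E then Some x else None)"
| "gmul V E _ _ = None"

fun teval :: "'a set \<Rightarrow> ('a \<times> 'a) set \<Rightarrow> (nat \<Rightarrow> 'a option) \<Rightarrow> bterm \<Rightarrow> 'a option" where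
  "teval V E \<sigma> (Var i) = \<sigma> i"
| "teval V E \<sigma> (Op a b) = gmul V E (teval V E \<sigma> a) (teval V E \<sigma> b)"

definition satisfies_id :: "'a set \<Rightarrow> ('a \<times> 'a) set \<Rightarrow> bterm \<Rightarrow> bterm \<Rightarrow> bool" where
  "satisfies_id V E t t' = (\<forall>\<sigma>. (\<forall>i. \<sigma> i \<in> gcarrier V) \<longrightarrow> teval V E \<sigma> t = teval V E \<sigma> t')"

definition scc_of :: "'a set \<Rightarrow> ('a \<times> 'a) set \<Rightarrow> 'a \<Rightarrow> 'a set" where
  "scc_of V E v = {u \<in> V. (v, u) \<in> E\<^sup>* \<and> (u, v) \<in> E\<^sup>*}"

definition is_scc :: "'a set \<Rightarrow> ('a \<times> 'a) set \<Rightarrow> 'a set \<Rightarrow> bool" where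
  "is_scc V E K = (\<exists>v\<in>V. K = scc_of V E v)"

definition trivial_scc :: "('a \<times> 'a) set \<Rightarrow> 'a set \<Rightarrow> bool" where
  "trivial_scc E K = (\<exists>v. K = {v} \<and> (v, v) \<notin> E)"

definition nontrivial_scc :: "'a set \<Rightarrow> ('a \<times> 'a) set \<Rightarrow> 'a set \<Rightarrow> bool" where
  "nontrivial_scc V E K = (is_scc V E K \<and> \<not> trivial_scc E K)"

definition entryway :: "'a set \<Rightarrow> ('a \<times> 'a) set \<Rightarrow> 'a list \<Rightarrow> 'a set \<Rightarrow> bool" where
  "entryway V E ps K = (ps \<noteq> [] \<and> set ps \<subseteq> V \<and>
      (\<forall>i. i + 1 < length ps \<longrightarrow> (ps ! i, ps ! (i + 1)) \<in> E) \<and>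
      (\<forall>i. i + 1 < length ps \<longrightarrow> trivial_scc E (scc_of V E (ps ! i))) \<and>
      nontrivial_scc V E K \<and> last ps \<in> K)"

(* E_G: maximal entryway length (Sup of empty set = -\<infinity>, unbounded = \<infinity>) *)
definition EG :: "'a set \<Rightarrow> ('a \<times> 'a) set \<Rightarrow> ereal" where
  "EG V E = Sup {ereal (real (length ps - 1)) | ps K. entryway V E ps K}"

end

theory Submission
  imports Defs
begin

text \<open>Extend an entryway \<open>v\<^sub>0 \<dots> v\<^sub>l\<close> to an infinite walk \<open>w\<close> (it can be continued
inside its nontrivial strongly connected component) and send each variable \<open>y\<close> to
\<open>w(d\<^sub>T(y))\<close>. Edges of \<open>G(t)\<close> go one level down, so \<open>t\<close> evaluates to a vertex under this
assignment; by the identity so does \<open>t'\<close>, hence every edge of \<open>G(t')\<close> is mapped to an edge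
of \<open>G\<close>. Since \<open>v\<^sub>0, \<dots>, v\<^sub>l\<^sub>-\<^sub>1\<close> lie on no cycle, an edge from position \<open>a\<close> of the walk to a
position \<open>b < l\<close> forces \<open>a < b\<close>.

A term of \<open>B\<^sub>n\<close> is determined by the depths of its variables, so some \<open>x\<close> has different
depths in \<open>G(t)\<close> and \<open>G(t')\<close>, the smaller one, say \<open>d\<^sub>T(x)\<close>, being at most \<open>L\<^sub>t\<^sub>,\<^sub>t\<^sub>' + 1\<close>.
The root-to-\<open>x\<close> path of \<open>G(t')\<close> moves along the walk from position \<open>0\<close> to position
\<open>d\<^sub>T(x)\<close> in \<open>d\<^sub>T\<^sub>'(x) > d\<^sub>T(x)\<close> edges; if \<open>d\<^sub>T(x) < l\<close> each of them increases the position,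
which is impossible. Hence \<open>l \<le> d\<^sub>T(x)\<close>.\<close>

fun leaf_depth :: "bterm \<Rightarrow> nat \<Rightarrow> nat" where
  "leaf_depth (Var i) y = 0"
| "leaf_depth (Op a b) y = (if y \<in> set (leaves a) then leaf_depth a y else Suc (leaf_depth b y))"

lemma leaves_neq_Nil: "leaves t \<noteq> []"
  by (induction t) auto

lemma hd_leaves: "hd (leaves t) = lmv t"
  by (induction t) (auto simp: leaves_neq_Nil)

lemma lmv_in_leaves: "lmv t \<in> set (leaves t)"
  by (induction t) auto

lemma tedges_subset_leaves: "tedges t \<subseteq> set (leaves t) \<times> set (leaves t)"
  using lmv_in_leaves by (induction t) fastforce+

lemma leaf_depth_lmv [simp]: "leaf_depth t (lmv t) = 0"
  using lmv_in_leaves by (induction t) auto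

lemma leaf_depth_eq_0_iff:
  "distinct (leaves t) \<Longrightarrow> y \<in> set (leaves t) \<Longrightarrow> leaf_depth t y = 0 \<longleftrightarrow> y = lmv t"
proof (induction t)
  case (Op a b)
  then show ?case
    using lmv_in_leaves[of a] lmv_in_leaves[of b] by (auto simp: disjoint_iff)
qed simp

lemma leaf_depth_tedges:
  assumes "distinct (leaves t)" and "(i, j) \<in> tedges t"
  shows "leaf_depth t j = Suc (leaf_depth t i)"
  using assms
proof (induction t)
  case (Var x)
  then show ?case by simp
next
  case (Op a b)
  then show ?case
    using tedges_subset_leaves[of a] tedges_subset_leaves[of b] lmv_in_leaves[of a] lmv_in_leaves[of b]
    by auto
qed

lemma relpow_tedges_leaf_depth: "y \<in> set (leaves t) \<Longrightarrow> (lmv t, y) \<in> tedges t ^^ leaf_depth t y"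
proof (induction t arbitrary: y)
  case (Var x)
  then show ?case by simp
next
  case (Op a b)
  show ?case
  proof (cases "y \<in> set (leaves a)")
    case True
    then show ?thesis
      using Op.IH(1) by (auto intro: relpowp_mono[to_set])
  next
    case False
    then have "(lmv b, y) \<in> tedges (Op a b) ^^ leaf_depth b y"
      using Op by (auto intro: relpowp_mono[to_set])
    then have "(lmv a, y) \<in> tedges (Op a b) ^^ Suc (leaf_depth b y)"
      by (rule relpow_Suc_I2[rotated]) simp
    then show ?thesis using False by simp
  qed
qed

lemma leaf_depth_if_relpow_tedges:
  "distinct (leaves t) \<Longrightarrow> (lmv t, y) \<in> tedges t ^^ k \<Longrightarrow> leaf_depth t y = k"
proof (induction k arbitrary: y)
  case 0
  then show ?case by auto
next
  case (Suc k)
  then obtain z where "(lmv t, z) \<in> tedges t ^^ k" and "(z, y) \<in> tedges t"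
    by auto
  then show ?case
    using Suc leaf_depth_tedges by metis
qed

lemma tdepth_eq_leaf_depth:
  assumes "distinct (leaves t)" and "lmv t = 1" and "y \<in> set (leaves t)"
  shows "tdepth t y = leaf_depth t y"
  unfolding tdepth_def
  using assms relpow_tedges_leaf_depth leaf_depth_if_relpow_tedges
  by (intro Least_equality) (metis, metis order_refl)

text \<open>The first leaf of \<open>b'\<close> has depth 1 in \<open>Op a' b'\<close>; were it a leaf of \<open>b\<close>, this would
force it to be the first leaf of \<open>b\<close>, so \<open>a\<close> and \<open>a'\<close> would have the same length.\<close>

lemma length_leaves_left_le:
  assumes leaves: "leaves a @ leaves b = leaves a' @ leaves b'"
    and dist: "distinct (leaves a @ leaves b)"
    and depth: "leaf_depth (Op a b) (lmv b') = leaf_depth (Op a' b') (lmv b')"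
  shows "length (leaves a') \<le> length (leaves a)"
proof (rule ccontr)
  assume longer: "\<not> ?thesis"
  define k where "k = length (leaves a') - length (leaves a)"
  have "lmv b' = (leaves a' @ leaves b') ! length (leaves a')"
    using hd_leaves[of b'] leaves_neq_Nil[of b'] by (simp add: hd_conv_nth nth_append)
  then have y: "lmv b' = leaves b ! k"
    using longer unfolding k_def leaves[symmetric] by (simp add: nth_append)
  have "length (leaves a) + length (leaves b) = length (leaves a') + length (leaves b')"
    and "0 < length (leaves b')"
    using arg_cong[OF leaves, of length] leaves_neq_Nil[of b'] by simp_all
  then have k: "0 < k" "k < length (leaves b)"
    using longer unfolding k_def by linarith+
  then have "lmv b' \<in> set (leaves b)" "lmv b' \<notin> set (leaves a)"
    using y dist by auto
  moreover have "lmv b' \<notin> set (leaves a')"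
    using dist lmv_in_leaves[of b'] unfolding leaves by auto
  ultimately have "leaf_depth b (lmv b') = 0"
    using depth by simp
  then have "leaves b ! k = leaves b ! 0"
    using y dist k leaf_depth_eq_0_iff[of b] hd_leaves[of b] leaves_neq_Nil[of b]
    by (simp add: hd_conv_nth)
  then show False
    using k dist nth_eq_iff_index_eq[of "leaves b" k 0] by (simp add: leaves_neq_Nil)
qed

lemma bterm_eq_if_leaf_depth_eq:
  "distinct (leaves t) \<Longrightarrow> leaves t' = leaves t \<Longrightarrow>
    (\<forall>y\<in>set (leaves t). leaf_depth t y = leaf_depth t' y) \<Longrightarrow> t = t'"
proof (induction t arbitrary: t')
  case (Var i)
  then show ?case
    using leaves_neq_Nil by (cases t') (auto simp: append_eq_Cons_conv)
next
  case (Op a b)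
  show ?case
  proof (cases t')
    case (Var i)
    then show ?thesis
      using Op.prems leaves_neq_Nil by (auto simp: Cons_eq_append_conv)
  next
    case (Op a' b')
    have leaves: "leaves a @ leaves b = leaves a' @ leaves b'"
      and dist: "distinct (leaves a @ leaves b)"
      and depth: "\<forall>y\<in>set (leaves a @ leaves b). leaf_depth (Op a b) y = leaf_depth (Op a' b') y"
      using Op.prems \<open>t' = Op a' b'\<close> by auto
    have "length (leaves a') = length (leaves a)"
    proof (rule antisym)
      show "length (leaves a') \<le> length (leaves a)"
        using depth lmv_in_leaves[of b'] leaves
        by (intro length_leaves_left_le[OF leaves dist]) simp
      show "length (leaves a) \<le> length (leaves a')"
      proof (rule length_leaves_left_le[OF leaves[symmetric]])
        show "distinct (leaves a' @ leaves b')"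
          using dist leaves by simp
        show "leaf_depth (Op a' b') (lmv b) = leaf_depth (Op a b) (lmv b)"
          using depth lmv_in_leaves[of b] by simp
      qed
    qed
    then have la: "leaves a' = leaves a" and lb: "leaves b' = leaves b"
      using leaves by auto
    have "a = a'"
      using dist depth la by (intro Op.IH(1)) force+
    moreover have "b = b'"
    proof (rule Op.IH(2))
      show "distinct (leaves b)"
        using dist by simp
      show "\<forall>y\<in>set (leaves b). leaf_depth b y = leaf_depth b' y"
      proof
        fix y
        assume "y \<in> set (leaves b)"
        then have "y \<notin> set (leaves a)" and "leaf_depth (Op a b) y = leaf_depth (Op a' b') y"
          using dist depth by auto
        then show "leaf_depth b y = leaf_depth b' y"
          using la by simp
      qed
    qed (fact lb)
    ultimately show ?thesis
      using \<open>t' = Op a' b'\<close> by simp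
  qed
qed

lemma Greatest_le_int:
  fixes P :: "int \<Rightarrow> bool"
  assumes "P k" and bounded: "\<And>m. P m \<Longrightarrow> m \<le> b"
  shows "k \<le> (GREATEST m. P m)"
proof -
  define S where "S = {m. P m \<and> k \<le> m}"
  have "finite S"
    using bounded by (intro finite_subset[of S "{k..b}"]) (auto simp: S_def)
  moreover have "k \<in> S"
    using \<open>P k\<close> by (simp add: S_def)
  ultimately have "(GREATEST m. P m) = Max S"
  proof (intro Greatest_equality)
    show "P (Max S)"
      using Max_in[of S] \<open>finite S\<close> \<open>k \<in> S\<close> by (auto simp: S_def)
    show "m \<le> Max S" if "P m" for m
    proof (cases "k \<le> m")
      case True
      then show ?thesis
        using that \<open>finite S\<close> by (simp add: S_def)
    next
      case False
      then show ?thesis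
        using Max_ge[OF \<open>finite S\<close> \<open>k \<in> S\<close>] by simp
    qed
  qed
  then show ?thesis
    using \<open>finite S\<close> \<open>k \<in> S\<close> by simp
qed

lemma Ltt_witness:
  assumes "x0 \<in> {1..n}" and "tdepth t x0 \<noteq> tdepth t' x0"
  obtains x where "x \<in> {1..n}" and "tdepth t x \<noteq> tdepth t' x"
    and "int (min (tdepth t x) (tdepth t' x)) \<le> Ltt n t t' + 1"
proof -
  define Q where "Q m \<longleftrightarrow> (\<forall>x\<in>{1..n}.
      (int (tdepth t x) \<le> m \<or> int (tdepth t' x) \<le> m) \<longrightarrow> tdepth t x = tdepth t' x)" for m
  have bounded: "m \<le> int (tdepth t x0)" if "Q m" for m
    using that assms unfolding Q_def by force
  have "Ltt n t t' = (GREATEST m. Q m)"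
    by (simp add: Ltt_def Q_def)
  then have "\<not> Q (Ltt n t t' + 1)"
    using Greatest_le_int[of Q "Ltt n t t' + 1", OF _ bounded] by linarith
  then obtain x where "x \<in> {1..n}" and "tdepth t x \<noteq> tdepth t' x"
    and "int (tdepth t x) \<le> Ltt n t t' + 1 \<or> int (tdepth t' x) \<le> Ltt n t t' + 1"
    unfolding Q_def by blast
  moreover from this(3) have "int (min (tdepth t x) (tdepth t' x)) \<le> Ltt n t t' + 1"
    by (simp only: of_nat_min min_le_iff_disj)
  ultimately show ?thesis
    using that by blast
qed

lemma Bn_leaves:
  assumes "t \<in> Bn n"
  shows "distinct (leaves t)" and "set (leaves t) = {1..n}" and "lmv t = 1"
proof -
  have leaves: "leaves t = [1..<Suc n]"
    using assms by (simp add: Bn_def)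
  then show "distinct (leaves t)" and "set (leaves t) = {1..n}"
    by auto
  have "0 < n"
    using leaves leaves_neq_Nil[of t] by (cases n) auto
  then show "lmv t = 1"
    using hd_leaves[of t] leaves by (simp add: upt_rec)
qed

lemma Bn_Ltt_witness:
  assumes "t \<in> Bn n" and "t' \<in> Bn n" and "t \<noteq> t'"
  obtains x where "x \<in> {1..n}" and "leaf_depth t x \<noteq> leaf_depth t' x"
    and "int (min (leaf_depth t x) (leaf_depth t' x)) \<le> Ltt n t t' + 1"
proof -
  have depths: "tdepth t y = leaf_depth t y" "tdepth t' y = leaf_depth t' y" if "y \<in> {1..n}" for y
    using that tdepth_eq_leaf_depth Bn_leaves[OF assms(1)] Bn_leaves[OF assms(2)] by auto
  have "\<exists>x0\<in>{1..n}. leaf_depth t x0 \<noteq> leaf_depth t' x0"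
    using bterm_eq_if_leaf_depth_eq[of t t'] assms Bn_leaves[OF assms(1)] unfolding Bn_def by auto
  then obtain x0 where "x0 \<in> {1..n}" and "tdepth t x0 \<noteq> tdepth t' x0"
    using depths by auto
  then show ?thesis
    using Ltt_witness depths that by metis
qed

lemma trivial_scc_not_on_cycle:
  assumes "E \<subseteq> V \<times> V" and "v \<in> V" and "trivial_scc E (scc_of V E v)"
  shows "(v, v) \<notin> E\<^sup>+"
proof
  assume "(v, v) \<in> E\<^sup>+"
  then obtain u where u: "(v, u) \<in> E" "(u, v) \<in> E\<^sup>*"
    by (auto dest: tranclD)
  have "u \<in> scc_of V E v" and "v \<in> scc_of V E v"
    using u assms(1,2) by (auto simp: scc_of_def)
  then show False
    using assms(3) u(1) by (auto simp: trivial_scc_def)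
qed

lemma nontrivial_scc_successor:
  assumes EV: "E \<subseteq> V \<times> V" and "nontrivial_scc V E K" and "u \<in> K"
  shows "\<exists>u'\<in>K. (u, u') \<in> E"
proof (cases "(u, u) \<in> E")
  case True
  then show ?thesis
    using \<open>u \<in> K\<close> by blast
next
  case False
  obtain v where K: "K = scc_of V E v" and "\<not> trivial_scc E K"
    using assms(2) by (auto simp: nontrivial_scc_def is_scc_def)
  then obtain z where "z \<in> K" and "z \<noteq> u"
    using False \<open>u \<in> K\<close> by (auto simp: trivial_scc_def)
  then have "(u, z) \<in> E\<^sup>+"
    using \<open>u \<in> K\<close> by (auto simp: K scc_of_def rtrancl_eq_or_trancl intro: rtrancl_trans)
  then obtain u' where u': "(u, u') \<in> E" "(u', z) \<in> E\<^sup>*"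
    by (auto dest: tranclD)
  have "u' \<in> K"
    using u' \<open>u \<in> K\<close> \<open>z \<in> K\<close> EV by (auto simp: K scc_of_def intro: rtrancl_trans rtrancl_into_rtrancl)
  then show ?thesis
    using u'(1) by blast
qed

lemma entryway_extends_to_walk:
  assumes EV: "E \<subseteq> V \<times> V" and ent: "entryway V E ps K"
  obtains w where "\<And>i. (w i, w (Suc i)) \<in> E" and "\<And>i. i < length ps \<Longrightarrow> w i = ps ! i"
proof -
  define P where "P n x \<longleftrightarrow> (n < length ps \<longrightarrow> x = ps ! n) \<and> (length ps \<le> Suc n \<longrightarrow> x \<in> K)" for n x
  have last: "ps ! (length ps - 1) \<in> K"
    using ent by (auto simp: entryway_def last_conv_nth)
  have "\<exists>w. \<forall>n. P n (w n) \<and> (w n, w (Suc n)) \<in> E"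
  proof (rule dependent_nat_choice)
    have "P 0 (ps ! 0)"
      using last ent by (auto simp: P_def le_Suc_eq entryway_def)
    then show "\<exists>x. P 0 x" ..
  next
    fix x n
    assume "P n x"
    show "\<exists>y. P (Suc n) y \<and> (x, y) \<in> E"
    proof (cases "Suc n < length ps")
      case True
      have "ps ! Suc n \<in> K" if "length ps \<le> Suc (Suc n)"
      proof -
        have "Suc n = length ps - 1"
          using True that by linarith
        then show ?thesis
          using last by simp
      qed
      moreover have "(x, ps ! Suc n) \<in> E"
        using \<open>P n x\<close> True ent unfolding P_def entryway_def by auto
      ultimately show ?thesis
        using True unfolding P_def by blast
    next
      case False
      then have "x \<in> K"
        using \<open>P n x\<close> by (simp add: P_def)
      moreover have "nontrivial_scc V E K"
        using ent by (simp add: entryway_def)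
      ultimately obtain y where "y \<in> K" and "(x, y) \<in> E"
        using nontrivial_scc_successor[OF EV] by blast
      then show ?thesis
        using False by (auto simp: P_def)
    qed
  qed
  then obtain w where w: "\<And>n. P n (w n)" and "\<And>n. (w n, w (Suc n)) \<in> E"
    by blast
  moreover have "w i = ps ! i" if "i < length ps" for i
    using w[of i] that unfolding P_def by blast
  ultimately show ?thesis
    using that by blast
qed

lemma walk_rtrancl:
  assumes "\<And>i. (w i, w (Suc i)) \<in> E" and "i \<le> j"
  shows "(w i, w j) \<in> E\<^sup>*"
  using assms(2) by (induction rule: dec_induct) (auto intro: rtrancl_into_rtrancl assms(1))

lemma walk_edge_index_less:
  assumes walk: "\<And>i. (w i, w (Suc i)) \<in> E" and "(w b, w b) \<notin> E\<^sup>+" and "(w a, w b) \<in> E"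
  shows "a < b"
proof (rule ccontr)
  assume "\<not> a < b"
  then have "(w b, w a) \<in> E\<^sup>*"
    using walk_rtrancl[of w E b a] walk by simp
  then show False
    using assms(2,3) by (meson rtrancl_into_trancl1)
qed

lemma walk_chain_index_increase:
  assumes walk: "\<And>i. (w i, w (Suc i)) \<in> E" and acyclic: "\<And>i. i < l \<Longrightarrow> (w i, w i) \<notin> E\<^sup>+"
    and "\<And>j. j < k \<Longrightarrow> (w (d j), w (d (Suc j))) \<in> E" and "d k < l"
  shows "d 0 + k \<le> d k"
  using assms(3,4)
proof (induction k arbitrary: d)
  case 0
  then show ?case by simp
next
  case (Suc k)
  have "d 1 + k \<le> d (Suc k)"
    using Suc.IH[of "\<lambda>j. d (Suc j)"] Suc.prems by simp
  moreover have "d 0 < d 1"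
    using calculation Suc.prems acyclic by (intro walk_edge_index_less[of w E, OF walk]) auto
  ultimately show ?case by simp
qed

lemma teval_Some_if_tedges:
  assumes "\<And>i. i \<in> set (leaves t) \<Longrightarrow> g i \<in> V" and "\<And>i j. (i, j) \<in> tedges t \<Longrightarrow> (g i, g j) \<in> E"
  shows "teval V E (\<lambda>i. Some (g i)) t = Some (g (lmv t))"
  using assms lmv_in_leaves by (induction t) auto

lemma tedges_preserved_if_teval_not_None:
  assumes "teval V E (\<lambda>i. Some (g i)) t \<noteq> None"
  shows "(i, j) \<in> tedges t \<Longrightarrow> (g i, g j) \<in> E"
proof -
  have "teval V E (\<lambda>i. Some (g i)) t = Some (g (lmv t)) \<and> (\<forall>(i, j)\<in>tedges t. (g i, g j) \<in> E)"
    using assms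
  proof (induction t)
    case (Op a b)
    then have "teval V E (\<lambda>i. Some (g i)) a \<noteq> None"
      by (metis gmul.simps(2) teval.simps(2))
    moreover have "teval V E (\<lambda>i. Some (g i)) b \<noteq> None"
      using Op.prems by (metis gmul.simps(3) teval.simps(2))
    ultimately show ?case
      using Op by (auto split: if_splits)
  qed simp
  then show "(i, j) \<in> tedges t \<Longrightarrow> (g i, g j) \<in> E"
    by auto
qed

lemma satisfies_id_walk_tedges:
  assumes sat: "satisfies_id V E t t'" and "distinct (leaves t)"
    and walk: "\<And>i. (w i, w (Suc i)) \<in> E" and "range w \<subseteq> V" and "(i, j) \<in> tedges t'"
  shows "(w (leaf_depth t i), w (leaf_depth t j)) \<in> E"
proof -
  define \<sigma> where "\<sigma> y = Some (w (leaf_depth t y))" for y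
  have "teval V E \<sigma> t = Some (w (leaf_depth t (lmv t)))"
    unfolding \<sigma>_def using assms(2,4) walk leaf_depth_tedges
    by (intro teval_Some_if_tedges) auto
  moreover have "\<sigma> y \<in> gcarrier V" for y
    using assms(4) by (auto simp: \<sigma>_def gcarrier_def)
  then have "teval V E \<sigma> t = teval V E \<sigma> t'"
    using sat by (simp add: satisfies_id_def)
  ultimately have "teval V E \<sigma> t' \<noteq> None"
    by simp
  then show ?thesis
    using tedges_preserved_if_teval_not_None assms(5) unfolding \<sigma>_def by fastforce
qed

lemma entryway_length_le_leaf_depth:
  assumes EV: "E \<subseteq> V \<times> V" and sat: "satisfies_id V E t t'"
    and "distinct (leaves t)" and root: "lmv t' = lmv t"
    and x: "x \<in> set (leaves t')" "leaf_depth t x < leaf_depth t' x"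
    and ent: "entryway V E ps K"
  shows "length ps \<le> Suc (leaf_depth t x)"
proof (rule ccontr)
  assume "\<not> ?thesis"
  then have x_early: "leaf_depth t x < length ps - 1"
    by simp
  obtain w where walk: "\<And>i. (w i, w (Suc i)) \<in> E" and w_ps: "\<And>i. i < length ps \<Longrightarrow> w i = ps ! i"
    using entryway_extends_to_walk[OF EV ent] by blast
  have "range w \<subseteq> V"
    using walk EV by blast
  have acyclic: "(w i, w i) \<notin> E\<^sup>+" if "i < length ps - 1" for i
  proof -
    have "ps ! i \<in> V" and "trivial_scc E (scc_of V E (ps ! i))"
      using that ent nth_mem[of i ps] by (auto simp: entryway_def)
    then show ?thesis
      using trivial_scc_not_on_cycle[OF EV] w_ps that by simp
  qed
  obtain f where f: "f 0 = lmv t'" "f (leaf_depth t' x) = x"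
    and path: "\<forall>j<leaf_depth t' x. (f j, f (Suc j)) \<in> tedges t'"
    using relpow_tedges_leaf_depth[OF x(1)] unfolding relpow_fun_conv by blast
  define d where "d j = leaf_depth t (f j)" for j
  have "d 0 + leaf_depth t' x \<le> d (leaf_depth t' x)"
  proof (rule walk_chain_index_increase[where w=w and l="length ps - 1", OF walk acyclic])
    show "(w (d j), w (d (Suc j))) \<in> E" if "j < leaf_depth t' x" for j
      unfolding d_def
      by (rule satisfies_id_walk_tedges[where w=w, OF sat assms(3) walk \<open>range w \<subseteq> V\<close>])
        (use path that in simp)
    show "d (leaf_depth t' x) < length ps - 1"
      using x_early f(2) by (simp add: d_def)
  qed
  then show False
    using f root x(2) by (simp add: d_def)
qed

lemma satisfies_id_sym: "satisfies_id V E t t' \<Longrightarrow> satisfies_id V E t' t"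
  unfolding satisfies_id_def by (simp add: eq_commute)

lemma Bn_entryway_length_le:
  assumes EV: "E \<subseteq> V \<times> V" and t: "t \<in> Bn n" and t': "t' \<in> Bn n"
    and sat: "satisfies_id V E t t'"
    and x: "x \<in> {1..n}" "leaf_depth t x \<noteq> leaf_depth t' x" and ent: "entryway V E ps K"
  shows "length ps - 1 \<le> min (leaf_depth t x) (leaf_depth t' x)"
proof -
  have root: "lmv t' = lmv t" and "x \<in> set (leaves t)" and "x \<in> set (leaves t')"
    using Bn_leaves[OF t] Bn_leaves[OF t'] x(1) by simp_all
  consider "leaf_depth t x < leaf_depth t' x" | "leaf_depth t' x < leaf_depth t x"
    using x(2) by linarith
  then show ?thesis
  proof cases
    case 1
    have "length ps \<le> Suc (leaf_depth t x)"
      by (rule entryway_length_le_leaf_depth[OF EV sat Bn_leaves(1)[OF t] root \<open>x \<in> set (leaves t')\<close> 1 ent])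
    then show ?thesis
      using 1 by simp
  next
    case 2
    have "length ps \<le> Suc (leaf_depth t' x)"
      by (rule entryway_length_le_leaf_depth[OF EV satisfies_id_sym[OF sat] Bn_leaves(1)[OF t']
            root[symmetric] \<open>x \<in> set (leaves t)\<close> 2 ent])
    then show ?thesis
      using 2 by simp
  qed
qed

lemma EG_le:
  assumes "\<And>ps K. entryway V E ps K \<Longrightarrow> int (length ps - 1) \<le> k"
  shows "EG V E \<le> ereal (real_of_int k)"
  unfolding EG_def
proof (rule Sup_least)
  fix y
  assume "y \<in> {ereal (real (length ps - 1)) | ps K. entryway V E ps K}"
  then obtain ps K where y: "y = ereal (real (length ps - 1))" and "entryway V E ps K"
    by blast
  then have "real (length ps - 1) \<le> real_of_int k"
    using assms by (metis of_int_le_iff of_int_of_nat_eq)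
  then show "y \<le> ereal (real_of_int k)"
    by (simp add: y)
qed

theorem lemma6p7:
  fixes V :: "'a set" and E :: "('a \<times> 'a) set" and t t' :: bterm and n :: nat
  assumes "E \<subseteq> V \<times> V"
    and "t \<in> Bn n" and "t' \<in> Bn n" and "t \<noteq> t'"
    and "satisfies_id V E t t'"
  shows "EG V E \<le> ereal (real_of_int (Ltt n t t' + 1))"
proof (rule EG_le)
  obtain x where x: "x \<in> {1..n}" "leaf_depth t x \<noteq> leaf_depth t' x"
    and level: "int (min (leaf_depth t x) (leaf_depth t' x)) \<le> Ltt n t t' + 1"
    using Bn_Ltt_witness[OF assms(2-4)] .
  fix ps K
  assume "entryway V E ps K"
  then have "length ps - 1 \<le> min (leaf_depth t x) (leaf_depth t' x)"
    using Bn_entryway_length_le[OF assms(1-3,5) x] by blast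
  then show "int (length ps - 1) \<le> Ltt n t t' + 1"
    using level by linarith
qed

end
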